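(* Let $A$ be an order complete Banach lattice algebra, let $\Lambda$ be an index set and let $\{p_\lambda\}_{\lambda\in\Lambda}\subseteq BP_l(A)\cap BP_r(A)$ satisfy $p_\alpha p_\beta=\delta_{\alpha\beta}p_\alpha$ for all $\alpha,\beta\in\Lambda$ ($\delta_{\alpha\beta}$ the Kronecker delta). Let $\Gamma\subseteq\Lambda\times\Lambda$ be arbitrary. Then for every $x\in A_+$ the supremum $P_\Gamma(x)=\bigvee_{(\alpha,\beta)\in\Gamma}p_\alpha x p_\beta$ exists in $A$, and the map $P_\Gamma\colon A_+\to A_+$ extends to a unique band projection $P_\Gamma\colon A\to A$.
   Context: A Banach lattice algebra is a real Banach lattice $A$ equipped with an associative bilinear product making $(A,\cdot)$ a Banach algebra ($\|xy\|\le\|x\|\|y\|$) such that $xy\ge 0$ whenever $x,y\ge0$. It is order complete if every nonempty subset bounded above has a supremum. For $a\in A$, $L_a,R_a\colon A\to A$ denote the multiplication operators $L_a(x)=ax$, $R_a(x)=xa$. A band projection on a Banach lattice $X$ is an operator $P\colon X\to X$ with $P^2=P$ and $0\le P\le I_X$ (equivalently, the projection onto a projection band along its disjoint complement). $BP_l(A)=\{a\in A_+: L_a \text{ is a band projection}\}$ and $BP_r(A)=\{a\in A_+: R_a\text{ is a band projection}\}$. *)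

theory Defs
  imports "HOL-Analysis.Analysis"
begin

text \<open>Banach lattice algebras are modelled on a type of class
  real_normed_algebra (associative, bilinear product, submultiplicative norm),
  banach (complete), ordered_real_vector (ordered vector space) and lattice
  (vector lattice).\<close>

definition labs :: "'a::{lattice, uminus} \<Rightarrow> 'a" where
  "labs x = sup x (- x)"

definition banach_lattice_algebra ::
  "'a::{real_normed_algebra, banach, ordered_real_vector, lattice} itself \<Rightarrow> bool" where
  "banach_lattice_algebra (_ :: 'a itself) \<longleftrightarrow>
     (\<forall>x y :: 'a. labs x \<le> labs y \<longrightarrow> norm x \<le> norm y) \<and>
     (\<forall>x y :: 'a. 0 \<le> x \<longrightarrow> 0 \<le> y \<longrightarrow> 0 \<le> x * y)"

definition is_lub_in :: "'a::order set \<Rightarrow> 'a \<Rightarrow> bool" where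
  "is_lub_in S s \<longleftrightarrow> (\<forall>y\<in>S. y \<le> s) \<and> (\<forall>u. (\<forall>y\<in>S. y \<le> u) \<longrightarrow> s \<le> u)"

definition is_lub_pos :: "'a::{order, zero} set \<Rightarrow> 'a \<Rightarrow> bool" where
  "is_lub_pos S s \<longleftrightarrow> 0 \<le> s \<and> (\<forall>y\<in>S. y \<le> s) \<and>
     (\<forall>u. 0 \<le> u \<longrightarrow> (\<forall>y\<in>S. y \<le> u) \<longrightarrow> s \<le> u)"

definition order_complete :: "'a::order itself \<Rightarrow> bool" where
  "order_complete (_ :: 'a itself) \<longleftrightarrow>
     (\<forall>S :: 'a set. S \<noteq> {} \<and> bdd_above S \<longrightarrow> (\<exists>s. is_lub_in S s))"

definition band_projection :: "('a::{real_vector, order} \<Rightarrow> 'a) \<Rightarrow> bool" where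
  "band_projection P \<longleftrightarrow> linear P \<and> P \<circ> P = P \<and>
     (\<forall>x. 0 \<le> x \<longrightarrow> 0 \<le> P x \<and> P x \<le> x)"

definition BP_l :: "'a::{real_algebra, order} set" where
  "BP_l = {a. 0 \<le> a \<and> band_projection (\<lambda>x. a * x)}"

definition BP_r :: "'a::{real_algebra, order} set" where
  "BP_r = {a. 0 \<le> a \<and> band_projection (\<lambda>x. x * a)}"

end

theory Submission
  imports Defs
begin

text \<open>Write \<open>Q\<^sub>\<alpha>\<^sub>\<beta> x = p\<^sub>\<alpha> x p\<^sub>\<beta>\<close>. Each \<open>Q\<^sub>\<alpha>\<^sub>\<beta> = L\<^sub>p\<^sub>\<alpha> R\<^sub>p\<^sub>\<beta>\<close> is a product of
  commuting band projections, hence a band projection, and by \<open>p\<^sub>\<alpha> p\<^sub>\<beta> = \<delta>\<^sub>\<alpha>\<^sub>\<beta> p\<^sub>\<alpha>\<close>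
  these projections are mutually orthogonal. For positive \<open>x\<close> the family
  \<open>Q\<^sub>\<gamma> x\<close> is bounded by \<open>x\<close>, so its supremum \<open>P x\<close> exists. Orthogonality gives
  \<open>Q\<^sub>\<gamma> u + Q\<^sub>\<delta> u \<le> u\<close> for \<open>u \<ge> 0\<close> and \<open>\<gamma> \<noteq> \<delta>\<close>, from which \<open>P\<close> is additive on
  the positive cone; it is also positively homogeneous and idempotent, and
  \<open>P x \<le> x\<close>. An additive, positively homogeneous map on the cone extends
  uniquely to a linear map via \<open>x = x\<^sup>+ - x\<^sup>-\<close>, which is then a band projection.\<close>

subsection \<open>Linear maps determined by the positive cone\<close>

definition cone_extension ::
  "('a::{ordered_real_vector, lattice} \<Rightarrow> 'b::real_vector) \<Rightarrow> 'a \<Rightarrow> 'b" where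
  "cone_extension f x = f (sup x 0) - f (sup x 0 - x)"

lemma cone_extension_diff:
  fixes f :: "'a::{ordered_real_vector, lattice} \<Rightarrow> 'b::real_vector"
  assumes add: "\<And>x y. 0 \<le> x \<Longrightarrow> 0 \<le> y \<Longrightarrow> f (x + y) = f x + f y"
    and "0 \<le> a" "0 \<le> b"
  shows "cone_extension f (a - b) = f a - f b"
proof -
  define c where "c = sup (a - b) 0"
  define d where "d = c - (a - b)"
  have "0 \<le> c" "0 \<le> d" by (simp_all add: c_def d_def)
  have "c + b = a + d" by (simp add: d_def algebra_simps)
  then have "f c + f b = f a + f d"
    using add \<open>0 \<le> a\<close> \<open>0 \<le> b\<close> \<open>0 \<le> c\<close> \<open>0 \<le> d\<close> by metis
  then have "f c = f a + f d - f b" by (simp add: eq_diff_eq)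
  moreover have "cone_extension f (a - b) = f c - f d"
    by (simp add: cone_extension_def c_def d_def)
  ultimately show ?thesis by simp
qed

lemma cone_extension_eq:
  fixes f :: "'a::{ordered_real_vector, lattice} \<Rightarrow> 'b::real_vector"
  assumes add: "\<And>x y. 0 \<le> x \<Longrightarrow> 0 \<le> y \<Longrightarrow> f (x + y) = f x + f y"
    and "0 \<le> x"
  shows "cone_extension f x = f x"
  using cone_extension_diff[OF add \<open>0 \<le> x\<close> order_refl] add[of 0 0] by simp

lemma linear_cone_extension:
  fixes f :: "'a::{ordered_real_vector, lattice} \<Rightarrow> 'b::real_vector"
  assumes add: "\<And>x y. 0 \<le> x \<Longrightarrow> 0 \<le> y \<Longrightarrow> f (x + y) = f x + f y"
    and homogeneous: "\<And>c x. 0 \<le> c \<Longrightarrow> 0 \<le> x \<Longrightarrow> f (c *\<^sub>R x) = c *\<^sub>R f x"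
  shows "linear (cone_extension f)"
proof (rule linearI)
  let ?pos = "\<lambda>x::'a. sup x 0" and ?neg = "\<lambda>x::'a. sup x 0 - x"
  have pos: "0 \<le> ?pos x" "0 \<le> ?neg x" for x by simp_all
  note diff = cone_extension_diff[OF add]
  fix x y :: 'a and c :: real
  have "x + y = (?pos x + ?pos y) - (?neg x + ?neg y)" by (simp add: algebra_simps)
  then have "cone_extension f (x + y) = f (?pos x + ?pos y) - f (?neg x + ?neg y)"
    using diff[of "?pos x + ?pos y" "?neg x + ?neg y"] pos by (metis add_nonneg_nonneg)
  also have "\<dots> = cone_extension f x + cone_extension f y"
    unfolding cone_extension_def add[OF pos(1) pos(1)] add[OF pos(2) pos(2)]
    by (simp add: algebra_simps)
  finally show "cone_extension f (x + y) = cone_extension f x + cone_extension f y" .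
  show "cone_extension f (c *\<^sub>R x) = c *\<^sub>R cone_extension f x"
  proof (cases "0 \<le> c")
    case True
    have "c *\<^sub>R x = c *\<^sub>R ?pos x - c *\<^sub>R ?neg x" by (simp add: algebra_simps)
    then have "cone_extension f (c *\<^sub>R x) = f (c *\<^sub>R ?pos x) - f (c *\<^sub>R ?neg x)"
      using diff[of "c *\<^sub>R ?pos x" "c *\<^sub>R ?neg x"] pos True by (metis scaleR_nonneg_nonneg)
    also have "\<dots> = c *\<^sub>R cone_extension f x"
      unfolding cone_extension_def homogeneous[OF True pos(1)] homogeneous[OF True pos(2)]
      by (simp add: scaleR_diff_right)
    finally show ?thesis .
  next
    case False
    then have "0 \<le> - c" by simp
    have "c *\<^sub>R x = (- c) *\<^sub>R ?neg x - (- c) *\<^sub>R ?pos x" by (simp add: algebra_simps)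
    then have "cone_extension f (c *\<^sub>R x) = f ((- c) *\<^sub>R ?neg x) - f ((- c) *\<^sub>R ?pos x)"
      using diff[of "(- c) *\<^sub>R ?neg x" "(- c) *\<^sub>R ?pos x"] pos \<open>0 \<le> - c\<close>
      by (metis scaleR_nonneg_nonneg)
    also have "\<dots> = c *\<^sub>R cone_extension f x"
      unfolding cone_extension_def homogeneous[OF \<open>0 \<le> - c\<close> pos(1)]
        homogeneous[OF \<open>0 \<le> - c\<close> pos(2)]
      by (simp add: scaleR_diff_right)
    finally show ?thesis .
  qed
qed

lemma linear_eq_on_cone:
  fixes P R :: "'a::{ordered_real_vector, lattice} \<Rightarrow> 'b::real_vector"
  assumes "linear P" "linear R" and "\<And>x. 0 \<le> x \<Longrightarrow> P x = R x"
  shows "P = R"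
proof
  fix x :: 'a
  have "x = sup x 0 - (sup x 0 - x)" by simp
  then show "P x = R x"
    using linear_diff[OF assms(1)] linear_diff[OF assms(2)] assms(3)[of "sup x 0"]
      assms(3)[of "sup x 0 - x"] by (metis diff_ge_0_iff_ge sup.cobounded1 sup.cobounded2)
qed

lemma band_projection_comp:
  assumes P: "band_projection P" and R: "band_projection R" and "P \<circ> R = R \<circ> P"
  shows "band_projection (P \<circ> R)"
  unfolding band_projection_def
proof (intro conjI allI impI)
  show "linear (P \<circ> R)"
    using P R by (simp add: band_projection_def linear_compose)
  have "P \<circ> R \<circ> (P \<circ> R) = P \<circ> P \<circ> (R \<circ> R)"
    using \<open>P \<circ> R = R \<circ> P\<close> by (metis comp_assoc)
  then show "P \<circ> R \<circ> (P \<circ> R) = P \<circ> R"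
    using P R by (simp add: band_projection_def)
  fix x :: 'a assume "0 \<le> x"
  then have "0 \<le> R x" "R x \<le> x" using R by (auto simp: band_projection_def)
  then show "0 \<le> (P \<circ> R) x" "(P \<circ> R) x \<le> x"
    using P by (auto simp: band_projection_def intro: order_trans)
qed

lemma is_lub_pos_unique: "is_lub_pos S s \<Longrightarrow> is_lub_pos S t \<Longrightarrow> s = t"
  unfolding is_lub_pos_def by (meson antisym)

lemma is_lub_pos_scaleR:
  fixes S :: "'a::ordered_real_vector set"
  assumes "is_lub_pos S s" "0 < c"
  shows "is_lub_pos ((*\<^sub>R) c ` S) (c *\<^sub>R s)"
  unfolding is_lub_pos_def
proof (intro conjI ballI allI impI)
  show "0 \<le> c *\<^sub>R s" using assms by (simp add: is_lub_pos_def scaleR_nonneg_nonneg)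
  show "y \<le> c *\<^sub>R s" if "y \<in> (*\<^sub>R) c ` S" for y
    using that assms by (auto simp: is_lub_pos_def scaleR_le_cancel_left_pos)
  fix u :: 'a assume "0 \<le> u" and bound: "\<forall>y\<in>(*\<^sub>R) c ` S. y \<le> u"
  have u: "u = c *\<^sub>R (inverse c *\<^sub>R u)" using \<open>0 < c\<close> by simp
  have "y \<le> inverse c *\<^sub>R u" if "y \<in> S" for y
    using bound that \<open>0 < c\<close> scaleR_le_cancel_left_pos[OF \<open>0 < c\<close>, of y "inverse c *\<^sub>R u"]
    by (simp flip: u)
  moreover have "0 \<le> inverse c *\<^sub>R u"
    using \<open>0 \<le> u\<close> \<open>0 < c\<close> by (simp add: scaleR_nonneg_nonneg)
  ultimately have "s \<le> inverse c *\<^sub>R u" using assms(1) by (simp add: is_lub_pos_def)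
  then show "c *\<^sub>R s \<le> u" using scaleR_left_mono[of s _ c] \<open>0 < c\<close> by fastforce
qed

subsection \<open>Supremum of a family of orthogonal band projections\<close>

locale orthogonal_band_projections =
  fixes Q :: "'j \<Rightarrow> 'a::{ordered_real_vector, lattice} \<Rightarrow> 'a"
    and J :: "'j set"
  assumes complete: "order_complete TYPE('a)"
    and band: "\<And>j. band_projection (Q j)"
    and orthogonal: "\<And>i j x. i \<noteq> j \<Longrightarrow> Q i (Q j x) = 0"
begin

lemma Q_nonneg: "0 \<le> x \<Longrightarrow> 0 \<le> Q j x"
  and Q_le: "0 \<le> x \<Longrightarrow> Q j x \<le> x"
  and Q_idem: "Q j (Q j x) = Q j x"
  using band[of j] by (auto simp: band_projection_def fun_eq_iff)

lemma linear_Q: "linear (Q j)"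
  using band by (simp add: band_projection_def)

lemmas Q_add = linear_add[OF linear_Q] and Q_diff = linear_diff[OF linear_Q]
  and Q_scaleR = linear_scale[OF linear_Q] and Q_zero = linear_0[OF linear_Q]

lemma Q_mono: "x \<le> y \<Longrightarrow> Q j x \<le> Q j y"
  using Q_nonneg[of "y - x" j] by (simp add: Q_diff)

lemma Q_add_le:
  assumes "0 \<le> u" "Q i z \<le> u" "Q j z \<le> u" "i \<noteq> j"
  shows "Q i z + Q j z \<le> u"
proof -
  have "Q i z \<le> Q i u" "Q j z \<le> Q j u"
    using Q_mono[OF assms(2), of i] Q_mono[OF assms(3), of j] by (simp_all add: Q_idem)
  moreover have "Q j u = Q j (u - Q i u)"
    using orthogonal[OF assms(4)[symmetric]] by (simp add: Q_diff)
  then have "Q j u \<le> u - Q i u"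
    using Q_le[of "u - Q i u" j] Q_le[OF assms(1), of i] by simp
  then have "Q i u + Q j u \<le> u" by (simp add: le_diff_eq add.commute)
  ultimately show ?thesis by (meson add_mono order_trans)
qed

lemma ex_is_lub_pos: "0 \<le> x \<Longrightarrow> \<exists>s. is_lub_pos ((\<lambda>j. Q j x) ` J) s"
proof (cases "J = {}")
  case True
  then show ?thesis by (auto simp: is_lub_pos_def)
next
  case False
  assume "0 \<le> x"
  then have "bdd_above ((\<lambda>j. Q j x) ` J)" by (auto intro: bdd_aboveI Q_le)
  moreover have "(\<lambda>j. Q j x) ` J \<noteq> {}" using False by simp
  ultimately obtain s where s: "is_lub_in ((\<lambda>j. Q j x) ` J) s"
    using complete unfolding order_complete_def by metis
  moreover from False obtain j where "j \<in> J" by auto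
  ultimately have "0 \<le> s"
    using Q_nonneg[OF \<open>0 \<le> x\<close>, of j] by (auto simp: is_lub_in_def intro: order_trans)
  with s show ?thesis by (auto simp: is_lub_in_def is_lub_pos_def)
qed

text \<open>For \<open>x\<close> not positive, \<open>lub_Q x\<close> is an unspecified junk value.\<close>
definition lub_Q :: "'a \<Rightarrow> 'a" where
  "lub_Q x = (SOME s. is_lub_pos ((\<lambda>j. Q j x) ` J) s)"

lemma is_lub_pos_lub_Q: "0 \<le> x \<Longrightarrow> is_lub_pos ((\<lambda>j. Q j x) ` J) (lub_Q x)"
  unfolding lub_Q_def using ex_is_lub_pos by (rule someI_ex)

lemma lub_Q_eq: "0 \<le> x \<Longrightarrow> is_lub_pos ((\<lambda>j. Q j x) ` J) s \<Longrightarrow> lub_Q x = s"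
  using is_lub_pos_lub_Q is_lub_pos_unique by blast

lemma lub_Q_nonneg: "0 \<le> x \<Longrightarrow> 0 \<le> lub_Q x"
  and Q_le_lub_Q: "0 \<le> x \<Longrightarrow> j \<in> J \<Longrightarrow> Q j x \<le> lub_Q x"
  and lub_Q_least: "0 \<le> x \<Longrightarrow> 0 \<le> u \<Longrightarrow> (\<And>j. j \<in> J \<Longrightarrow> Q j x \<le> u) \<Longrightarrow> lub_Q x \<le> u"
  using is_lub_pos_lub_Q by (auto simp: is_lub_pos_def)

lemma lub_Q_least_nonempty:
  assumes "0 \<le> x" "i \<in> J" "\<And>j. j \<in> J \<Longrightarrow> Q j x \<le> u"
  shows "lub_Q x \<le> u"
  using assms Q_nonneg[OF assms(1), of i] by (blast intro: lub_Q_least order_trans)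

lemma lub_Q_le: "0 \<le> x \<Longrightarrow> lub_Q x \<le> x"
  by (rule lub_Q_least) (auto intro: Q_le)

lemma lub_Q_empty: "J = {} \<Longrightarrow> 0 \<le> x \<Longrightarrow> lub_Q x = 0"
  by (rule lub_Q_eq) (auto simp: is_lub_pos_def)

lemma lub_Q_add:
  assumes "0 \<le> x" "0 \<le> y"
  shows "lub_Q (x + y) = lub_Q x + lub_Q y"
proof (cases "J = {}")
  case True
  show ?thesis using assms lub_Q_empty[OF True] by simp
next
  case False
  then obtain j0 where "j0 \<in> J" by auto
  have xy: "0 \<le> x + y" using assms by simp
  have "lub_Q (x + y) \<le> lub_Q x + lub_Q y"
    using assms by (intro lub_Q_least[OF xy])
      (auto simp: Q_add intro: add_mono Q_le_lub_Q add_nonneg_nonneg lub_Q_nonneg)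
  moreover have both: "Q i x + Q j y \<le> lub_Q (x + y)" if "i \<in> J" "j \<in> J" for i j
  proof (cases "i = j")
    case True
    then show ?thesis using Q_le_lub_Q[OF xy \<open>i \<in> J\<close>] by (simp add: Q_add)
  next
    case False
    have "Q i x \<le> Q i (x + y)" "Q j y \<le> Q j (x + y)" using assms by (simp_all add: Q_mono)
    moreover have "Q i (x + y) + Q j (x + y) \<le> lub_Q (x + y)"
      using Q_add_le lub_Q_nonneg[OF xy] Q_le_lub_Q[OF xy] that False by blast
    ultimately show ?thesis by (meson add_mono order_trans)
  qed
  have "Q j y \<le> lub_Q (x + y) - lub_Q x" if "j \<in> J" for j
    using lub_Q_least_nonempty[OF assms(1) \<open>j0 \<in> J\<close>, of "lub_Q (x + y) - Q j y"] both that
    by (simp add: le_diff_eq add.commute)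
  then have "lub_Q y \<le> lub_Q (x + y) - lub_Q x"
    using lub_Q_least_nonempty[OF assms(2) \<open>j0 \<in> J\<close>] by blast
  ultimately show ?thesis by (simp add: le_diff_eq add.commute)
qed

lemma lub_Q_scaleR:
  assumes "0 \<le> c" "0 \<le> x"
  shows "lub_Q (c *\<^sub>R x) = c *\<^sub>R lub_Q x"
proof (cases "c = 0")
  case True
  then show ?thesis using lub_Q_eq[of 0 0] by (simp add: is_lub_pos_def Q_zero)
next
  case False
  with assms have "0 < c" by simp
  have "(\<lambda>j. Q j (c *\<^sub>R x)) ` J = (*\<^sub>R) c ` (\<lambda>j. Q j x) ` J"
    by (auto simp: Q_scaleR)
  then show ?thesis
    using is_lub_pos_scaleR[OF is_lub_pos_lub_Q[OF assms(2)] \<open>0 < c\<close>]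
      lub_Q_eq[OF scaleR_nonneg_nonneg[OF assms]] by simp
qed

lemma lub_Q_idem:
  assumes "0 \<le> x"
  shows "lub_Q (lub_Q x) = lub_Q x"
proof -
  have "Q j (lub_Q x) = Q j x" if "j \<in> J" for j
  proof (rule antisym)
    show "Q j (lub_Q x) \<le> Q j x" by (rule Q_mono[OF lub_Q_le[OF assms]])
    show "Q j x \<le> Q j (lub_Q x)"
      using Q_mono[OF Q_le_lub_Q[OF assms that], of j] by (simp add: Q_idem)
  qed
  then have "(\<lambda>j. Q j (lub_Q x)) ` J = (\<lambda>j. Q j x) ` J" by simp
  then show ?thesis
    using lub_Q_eq[OF lub_Q_nonneg[OF assms]] is_lub_pos_lub_Q[OF assms] by simp
qed

lemma linear_cone_extension_lub_Q: "linear (cone_extension lub_Q)"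
  by (rule linear_cone_extension) (simp_all add: lub_Q_add lub_Q_scaleR)

lemma cone_extension_lub_Q: "0 \<le> x \<Longrightarrow> cone_extension lub_Q x = lub_Q x"
  by (rule cone_extension_eq) (simp_all add: lub_Q_add)

lemma band_projection_cone_extension_lub_Q: "band_projection (cone_extension lub_Q)"
  unfolding band_projection_def
proof (intro conjI allI impI)
  note lin = linear_cone_extension_lub_Q and ext = cone_extension_lub_Q
  show "linear (cone_extension lub_Q)" by (rule lin)
  show "cone_extension lub_Q \<circ> cone_extension lub_Q = cone_extension lub_Q"
  proof (rule linear_eq_on_cone)
    show "linear (cone_extension lub_Q \<circ> cone_extension lub_Q)"
      using lin by (rule linear_compose[OF lin])
    show "(cone_extension lub_Q \<circ> cone_extension lub_Q) x = cone_extension lub_Q x"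
      if "0 \<le> x" for x
      using that by (simp add: ext lub_Q_nonneg lub_Q_idem)
  qed (rule lin)
  fix x :: 'a assume "0 \<le> x"
  then show "0 \<le> cone_extension lub_Q x" "cone_extension lub_Q x \<le> x"
    by (simp_all add: ext lub_Q_nonneg lub_Q_le)
qed

theorem ex1_band_projection_lub:
  "(\<forall>x. 0 \<le> x \<longrightarrow> (\<exists>s. is_lub_pos ((\<lambda>j. Q j x) ` J) s))
   \<and> (\<exists>!P. band_projection P \<and> (\<forall>x. 0 \<le> x \<longrightarrow> is_lub_pos ((\<lambda>j. Q j x) ` J) (P x)))"
proof (rule conjI[OF _ ex1I])
  show "\<forall>x. 0 \<le> x \<longrightarrow> (\<exists>s. is_lub_pos ((\<lambda>j. Q j x) ` J) s)"
    using ex_is_lub_pos by blast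
  show "band_projection (cone_extension lub_Q) \<and>
    (\<forall>x. 0 \<le> x \<longrightarrow> is_lub_pos ((\<lambda>j. Q j x) ` J) (cone_extension lub_Q x))"
    using band_projection_cone_extension_lub_Q
    by (simp add: cone_extension_lub_Q is_lub_pos_lub_Q)
  fix P assume P: "band_projection P \<and>
    (\<forall>x. 0 \<le> x \<longrightarrow> is_lub_pos ((\<lambda>j. Q j x) ` J) (P x))"
  show "P = cone_extension lub_Q"
  proof (rule linear_eq_on_cone)
    show "linear P" "linear (cone_extension lub_Q)"
      using P band_projection_cone_extension_lub_Q by (simp_all add: band_projection_def)
    show "P x = cone_extension lub_Q x" if "0 \<le> x" for x
      using P that lub_Q_eq[symmetric] by (simp add: cone_extension_lub_Q)
  qed
qed

end

subsection \<open>Two-sided compressions by orthogonal band projections\<close>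

lemma band_projection_compression:
  fixes a b :: "'a::{real_normed_algebra, ordered_real_vector, lattice}"
  assumes "a \<in> BP_l" "b \<in> BP_r"
  shows "band_projection (\<lambda>x. a * x * b)"
proof -
  have "band_projection ((\<lambda>x. a * x) \<circ> (\<lambda>x. x * b))"
    using assms by (intro band_projection_comp) (auto simp: BP_l_def BP_r_def mult.assoc)
  then show ?thesis by (simp add: comp_def mult.assoc)
qed

theorem mainTheorem1:
  fixes p :: "'i \<Rightarrow> 'a::{real_normed_algebra, banach, ordered_real_vector, lattice}"
    and \<Gamma> :: "('i \<times> 'i) set"
  assumes "banach_lattice_algebra TYPE('a)"
    and "order_complete TYPE('a)"
    and "\<And>l. p l \<in> BP_l \<inter> BP_r"
    and "\<And>\<alpha> \<beta>. p \<alpha> * p \<beta> = (if \<alpha> = \<beta> then p \<alpha> else 0)"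
  shows "(\<forall>x::'a. 0 \<le> x \<longrightarrow>
            (\<exists>s. is_lub_pos {p \<alpha> * x * p \<beta> | \<alpha> \<beta>. (\<alpha>, \<beta>) \<in> \<Gamma>} s))
       \<and> (\<exists>!P :: 'a \<Rightarrow> 'a. band_projection P \<and>
            (\<forall>x. 0 \<le> x \<longrightarrow> is_lub_pos {p \<alpha> * x * p \<beta> | \<alpha> \<beta>. (\<alpha>, \<beta>) \<in> \<Gamma>} (P x)))"
proof -
  define Q where "Q = (\<lambda>(\<alpha>, \<beta>) x. p \<alpha> * x * p \<beta>)"
  interpret orthogonal_band_projections Q \<Gamma>
  proof
    show "band_projection (Q \<gamma>)" for \<gamma>
      using assms(3) by (cases \<gamma>) (simp add: Q_def band_projection_compression)
    show "Q \<gamma> (Q \<delta> x) = 0" if "\<gamma> \<noteq> \<delta>" for \<gamma> \<delta> x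
    proof -
      obtain \<alpha> \<beta> \<alpha>' \<beta>' where "\<gamma> = (\<alpha>, \<beta>)" "\<delta> = (\<alpha>', \<beta>')" by fastforce
      moreover have "Q \<gamma> (Q \<delta> x) = (p \<alpha> * p \<alpha>') * x * (p \<beta>' * p \<beta>)"
        using calculation by (simp add: Q_def mult.assoc)
      ultimately show ?thesis using that assms(4) by auto
    qed
  qed (rule assms(2))
  have "{p \<alpha> * x * p \<beta> | \<alpha> \<beta>. (\<alpha>, \<beta>) \<in> \<Gamma>} = (\<lambda>\<gamma>. Q \<gamma> x) ` \<Gamma>" for x
    by (force simp: Q_def)
  then show ?thesis using ex1_band_projection_lub by presburger
qed

end
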